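(* Let $C_1,C_2,\alpha,\beta>0$ be constants and $d\ge1$, and let $k(t)$ solve the ODE $$k'(t)=C_1k(1-k^{\alpha})+C_2k^{d+1}e^{-\beta t}.$$ Then there exists $\delta>0$ such that if $0<k(0)<\delta$, then $k(t)\to1$ exponentially as $t\to\infty$, i.e. $|k(t)-1|\le Ce^{-\epsilon t}$ for some constants $C,\epsilon>0$.
   Context: In the paper $d\ge3$ denotes the spatial dimension. *)

theory Defs
  imports "HOL-Analysis.Analysis"
begin

end

theory Submission
  imports Defs
begin

text \<open>
  While \<open>k\<close> stays in \<open>(0, 2)\<close> the right-hand side is bounded by \<open>L k\<close> (\<open>L = growth_rate\<close>),
  so \<open>k\<close> grows at most like \<open>k(0) e\<^sup>L\<^sup>t\<close>. Choosing \<open>k(0) < e\<^sup>-\<^sup>L\<^sup>T\<close> keeps \<open>k < 1\<close> up to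
  the time \<open>T = escape_time\<close> after which the forcing term is so small that the vector field
  points into \<open>(0, 2)\<close> at \<open>k = 2\<close>; hence \<open>k\<close> never leaves \<open>(0, 2)\<close>. The substitution
  \<open>z = k\<^sup>-\<^sup>\<alpha> - 1\<close> turns the equation into the linear one \<open>z' = -\<alpha> C\<^sub>1 z - g(t)\<close> with
  \<open>0 \<le> g(t) \<le> G e\<^sup>-\<^sup>\<beta>\<^sup>t\<close>, whose solutions decay exponentially, and \<open>|k - 1| \<le> const \<cdot> |z|\<close>
  on \<open>(0, 2)\<close>.
\<close>

lemma at_within_Ici_eq_at:
  fixes t :: real
  assumes "t > 0"
  shows "at t within {0..} = at t"
  by (rule at_within_interior) (use assms in \<open>simp add: interior_Ici[of "-1"]\<close>)

lemma Ici_derivative_nonneg_imp_le: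
  fixes f f' :: "real \<Rightarrow> real"
  assumes deriv: "\<forall>t\<ge>0. (f has_real_derivative f' t) (at t within {0..})"
    and "0 \<le> a" "a \<le> b"
    and nonneg: "\<And>t. a < t \<Longrightarrow> t < b \<Longrightarrow> f' t \<ge> 0"
  shows "f a \<le> f b"
proof (rule DERIV_nonneg_imp_increasing_open[OF \<open>a \<le> b\<close>])
  fix t assume t: "a < t" "t < b"
  with \<open>0 \<le> a\<close> have "t > 0" by linarith
  then show "\<exists>y. DERIV f t :> y \<and> y \<ge> 0"
    using deriv nonneg[OF t] at_within_Ici_eq_at[of t] by (metis less_imp_le)
next
  show "continuous_on {a..b} f"
    by (rule DERIV_continuous_on[where D=f'], rule DERIV_subset[where s="{0..}"])
      (use deriv assms in auto)
qed

lemma exp_weighted_increasing: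
  fixes f f' :: "real \<Rightarrow> real"
  assumes deriv: "\<forall>t\<ge>0. (f has_real_derivative f' t) (at t within {0..})"
    and "0 \<le> a" "a \<le> b"
    and "\<And>t. a < t \<Longrightarrow> t < b \<Longrightarrow> f' t + c * f t \<ge> 0"
  shows "f a * exp (c * a) \<le> f b * exp (c * b)"
proof (rule Ici_derivative_nonneg_imp_le[where f="\<lambda>t. f t * exp (c * t)"])
  show "\<forall>t\<ge>0. ((\<lambda>t. f t * exp (c * t)) has_real_derivative (f' t + c * f t) * exp (c * t))
          (at t within {0..})"
    using deriv by (auto intro!: derivative_eq_intros simp: algebra_simps)
qed (use assms in auto)

lemma exp_weighted_decreasing:
  fixes f f' :: "real \<Rightarrow> real"
  assumes deriv: "\<forall>t\<ge>0. (f has_real_derivative f' t) (at t within {0..})"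
    and "0 \<le> a" "a \<le> b"
    and "\<And>t. a < t \<Longrightarrow> t < b \<Longrightarrow> f' t + c * f t \<le> 0"
  shows "f b * exp (c * b) \<le> f a * exp (c * a)"
proof -
  have "\<forall>t\<ge>0. ((\<lambda>t. - f t) has_real_derivative - f' t) (at t within {0..})"
    using deriv by (auto intro: derivative_intros)
  then have "- f a * exp (c * a) \<le> - f b * exp (c * b)"
    using exp_weighted_increasing[of "\<lambda>t. - f t" "\<lambda>t. - f' t" a b c] assms by force
  then show ?thesis by simp
qed

lemma first_exit_time:
  fixes f :: "real \<Rightarrow> 'a::t2_space"
  assumes cont: "continuous_on {0..} f" and "open U" "f 0 \<in> U" "t \<ge> 0" "f t \<notin> U"
  obtains t1 where "t1 > 0" "f t1 \<in> frontier U" "\<And>s. 0 \<le> s \<Longrightarrow> s < t1 \<Longrightarrow> f s \<in> U"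
proof -
  define S where "S = {0..} \<inter> f -` (- U)"
  have "S \<noteq> {}" "bdd_below S"
    using assms by (auto simp: S_def intro: bdd_belowI[of _ 0])
  moreover have "closed S"
    unfolding S_def using cont \<open>open U\<close> by (intro continuous_closed_preimage) auto
  ultimately have t1S: "Inf S \<in> S" by (rule closed_contains_Inf)
  have before: "f s \<in> U" if "0 \<le> s" "s < Inf S" for s
    using cInf_lower[OF _ \<open>bdd_below S\<close>, of s] that by (force simp: S_def)
  have pos: "Inf S > 0"
    using t1S \<open>f 0 \<in> U\<close> by (cases "Inf S = 0") (auto simp: S_def)
  have "f ` closure {0..<Inf S} \<subseteq> closure U"
    using before closure_subset[of U]
    by (intro image_closure_subset continuous_on_subset[OF cont]) (auto simp: pos)
  then have "f (Inf S) \<in> closure U"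
    using pos by (auto simp: closure_atLeastLessThan)
  with t1S have "f (Inf S) \<in> frontier U"
    using \<open>open U\<close> by (auto simp: S_def frontier_def interior_open)
  with pos before show thesis using that by blast
qed

lemma abs_diff_one_le_powr_neg:
  fixes x \<alpha> M :: real
  assumes "0 < x" "x < M" "1 \<le> M" "\<alpha> > 0"
  shows "\<alpha> * M powr (-\<alpha>-1) * \<bar>x - 1\<bar> \<le> \<bar>x powr (-\<alpha>) - 1\<bar>"
proof -
  have deriv: "\<And>y. 0 < y \<Longrightarrow> DERIV (\<lambda>y. y powr (-\<alpha>)) y :> (-\<alpha>) * y powr (-\<alpha> - 1)"
    by (rule has_real_derivative_powr)
  have slope: "\<alpha> * M powr (-\<alpha>-1) \<le> \<alpha> * y powr (-\<alpha>-1)" if "0 < y" "y \<le> M" for y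
    using that assms by (intro mult_left_mono powr_mono2') auto
  consider "x < 1" | "x = 1" | "1 < x" by linarith
  then show ?thesis
  proof cases
    case 1
    obtain y where y: "x < y" "y < 1"
      "1 powr (-\<alpha>) - x powr (-\<alpha>) = (1 - x) * ((-\<alpha>) * y powr (-\<alpha> - 1))"
      using MVT2[OF 1, of "\<lambda>y. y powr (-\<alpha>)" "\<lambda>y. (-\<alpha>) * y powr (-\<alpha> - 1)"] deriv assms by force
    have "\<alpha> * M powr (-\<alpha>-1) * (1 - x) \<le> \<alpha> * y powr (-\<alpha>-1) * (1 - x)"
      using 1 y slope[of y] assms by (intro mult_right_mono) auto
    also have "\<dots> = x powr (-\<alpha>) - 1" using y(3) by (simp add: algebra_simps)
    finally show ?thesis using 1 by auto
  next
    case 3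
    obtain y where y: "1 < y" "y < x"
      "x powr (-\<alpha>) - 1 powr (-\<alpha>) = (x - 1) * ((-\<alpha>) * y powr (-\<alpha> - 1))"
      using MVT2[OF 3, of "\<lambda>y. y powr (-\<alpha>)" "\<lambda>y. (-\<alpha>) * y powr (-\<alpha> - 1)"] deriv assms by force
    have "\<alpha> * M powr (-\<alpha>-1) * (x - 1) \<le> \<alpha> * y powr (-\<alpha>-1) * (x - 1)"
      using 3 y slope[of y] assms by (intro mult_right_mono) auto
    also have "\<dots> = 1 - x powr (-\<alpha>)" using y(3) by (simp add: algebra_simps)
    finally show ?thesis using 3 by auto
  qed simp
qed

lemma forced_linear_decay_upper:
  fixes z g :: "real \<Rightarrow> real"
  assumes deriv: "\<forall>t\<ge>0. (z has_real_derivative - a * z t - g t) (at t within {0..})"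
    and g_nonneg: "\<And>t. t \<ge> 0 \<Longrightarrow> g t \<ge> 0" and "t \<ge> 0"
  shows "z t \<le> z 0 * exp (- a * t)"
proof -
  have "z t * exp (a * t) \<le> z 0"
    using exp_weighted_decreasing[OF deriv, of 0 t a] g_nonneg \<open>t \<ge> 0\<close> by force
  then have "z t * exp (a * t) * exp (- a * t) \<le> z 0 * exp (- a * t)"
    by (rule mult_right_mono) simp
  then show ?thesis by (simp add: mult.assoc flip: exp_add)
qed

lemma forced_linear_exp_decay:
  fixes z g :: "real \<Rightarrow> real"
  assumes deriv: "\<forall>t\<ge>0. (z has_real_derivative - a * z t - g t) (at t within {0..})"
    and "a > 0" "\<beta> > 0" "G > 0"
    and g_bounds: "\<And>t. t \<ge> 0 \<Longrightarrow> 0 \<le> g t \<and> g t \<le> G * exp (- \<beta> * t)"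
  shows "\<exists>A>0. \<exists>\<epsilon>>0. \<forall>t\<ge>0. \<bar>z t\<bar> \<le> A * exp (- \<epsilon> * t)"
proof -
  define \<epsilon> where "\<epsilon> = min a \<beta> / 2"
  define A where "A = \<bar>z 0\<bar> + G / (a - \<epsilon>)"
  have \<epsilon>: "0 < \<epsilon>" "\<epsilon> < a" "\<epsilon> \<le> \<beta>"
    using assms by (auto simp: \<epsilon>_def)
  have "G / (a - \<epsilon>) > 0" using \<epsilon> \<open>G > 0\<close> by simp
  then have "A > 0" "z 0 + A \<ge> 0" "\<bar>z 0\<bar> \<le> A" by (auto simp: A_def)
  have "A * (a - \<epsilon>) = \<bar>z 0\<bar> * (a - \<epsilon>) + G"
    using \<epsilon> by (simp add: A_def field_simps)
  moreover have "\<bar>z 0\<bar> * (a - \<epsilon>) \<ge> 0"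
    using \<epsilon> by simp
  ultimately have G_le: "G \<le> A * (a - \<epsilon>)"
    by linarith
  have upper: "z t \<le> A * exp (- \<epsilon> * t)" if "t \<ge> 0" for t
  proof -
    have "z t \<le> z 0 * exp (- a * t)"
      using forced_linear_decay_upper[OF deriv] g_bounds that by blast
    also have "\<dots> \<le> A * exp (- a * t)"
      using \<open>\<bar>z 0\<bar> \<le> A\<close> by (intro mult_right_mono) auto
    also have "\<dots> \<le> A * exp (- \<epsilon> * t)"
      using \<epsilon> \<open>A > 0\<close> that by (intro mult_left_mono) (auto intro: mult_right_mono)
    finally show ?thesis .
  qed
  \<comment> \<open>The comparison function \<open>- A e^{-\<epsilon> t}\<close> is a subsolution because \<open>\<epsilon> < a\<close>
      and the forcing decays at least as fast as \<open>e^{-\<epsilon> t}\<close>.\<close>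
  have lower: "z t + A * exp (- \<epsilon> * t) \<ge> 0" if "t \<ge> 0" for t
  proof -
    have comparison_deriv: "\<forall>t\<ge>0. ((\<lambda>t. z t + A * exp (- \<epsilon> * t)) has_real_derivative
            - a * z t - g t - \<epsilon> * A * exp (- \<epsilon> * t)) (at t within {0..})"
      using deriv by (auto intro!: derivative_eq_intros)
    have "- a * z s - g s - \<epsilon> * A * exp (- \<epsilon> * s) + a * (z s + A * exp (- \<epsilon> * s)) \<ge> 0"
      if "s > 0" for s
    proof -
      have "- \<beta> * s \<le> - \<epsilon> * s"
        using \<epsilon> that by (simp add: mult_right_mono)
      then have "G * exp (- \<beta> * s) \<le> G * exp (- \<epsilon> * s)"
        using \<open>G > 0\<close> by simp
      then have "g s \<le> G * exp (- \<epsilon> * s)"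
        using g_bounds[of s] that by linarith
      also have "\<dots> \<le> A * (a - \<epsilon>) * exp (- \<epsilon> * s)"
        using G_le by (intro mult_right_mono) auto
      finally show ?thesis by (simp add: algebra_simps)
    qed
    then have "z 0 + A \<le> (z t + A * exp (- \<epsilon> * t)) * exp (a * t)"
      using exp_weighted_increasing[OF comparison_deriv, of 0 t a] that by simp
    with \<open>z 0 + A \<ge> 0\<close> have "0 \<le> (z t + A * exp (- \<epsilon> * t)) * exp (a * t)"
      by linarith
    then show ?thesis by (simp add: zero_le_mult_iff)
  qed
  have "\<forall>t\<ge>0. \<bar>z t\<bar> \<le> A * exp (- \<epsilon> * t)"
    using upper lower by (force simp: abs_le_iff)
  with \<open>A > 0\<close> \<epsilon>(1) show ?thesis by blast
qed

locale perturbed_logistic =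
  fixes C1 C2 \<alpha> \<beta> :: real and d :: nat
  assumes C1_pos: "C1 > 0" and C2_pos: "C2 > 0" and \<alpha>_pos: "\<alpha> > 0" and \<beta>_pos: "\<beta> > 0"
begin

definition rhs :: "real \<Rightarrow> real \<Rightarrow> real" where
  "rhs t x = C1 * x * (1 - x powr \<alpha>) + C2 * x ^ (d + 1) * exp (- \<beta> * t)"

definition solves :: "(real \<Rightarrow> real) \<Rightarrow> bool" where
  "solves k \<longleftrightarrow> (\<forall>t\<ge>0. (k has_real_derivative rhs t (k t)) (at t within {0..}))"

definition growth_rate :: real where
  "growth_rate = C1 + C1 * 2 powr \<alpha> + C2 * 2 ^ d"

definition escape_time :: real where
  "escape_time = C2 * 2 ^ d / (\<beta> * C1 * (2 powr \<alpha> - 1))"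

definition initial_threshold :: real where
  "initial_threshold = exp (- growth_rate * escape_time)"

lemma two_powr_gt_one: "2 powr \<alpha> > 1"
  using \<alpha>_pos by (simp add: powr_less_mono[of 0 \<alpha> 2, simplified])

lemma growth_rate_pos: "growth_rate > 0"
  using C1_pos C2_pos by (simp add: growth_rate_def add_pos_nonneg)

lemma escape_time_pos: "escape_time > 0"
  using C1_pos C2_pos \<beta>_pos two_powr_gt_one by (simp add: escape_time_def)

lemma initial_threshold_pos: "initial_threshold > 0"
  by (simp add: initial_threshold_def)

lemma initial_threshold_lt_one: "initial_threshold < 1"
  using growth_rate_pos escape_time_pos by (simp add: initial_threshold_def)

lemma rhs_linear_bound:
  assumes "0 < x" "x < 2" "t \<ge> 0"
  shows "\<bar>rhs t x\<bar> \<le> growth_rate * x"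
proof -
  have "x powr \<alpha> \<le> 2 powr \<alpha>" using assms \<alpha>_pos by (intro powr_mono2) auto
  then have logistic: "C1 * x powr \<alpha> \<le> C1 * 2 powr \<alpha>" "0 \<le> C1 * x powr \<alpha>"
    using C1_pos by (simp_all add: mult_left_mono)
  have "x ^ d \<le> 2 ^ d" using assms by (intro power_mono) auto
  moreover have "exp (- \<beta> * t) \<le> 1" using \<beta>_pos assms by simp
  ultimately have "x ^ d * exp (- \<beta> * t) \<le> 2 ^ d * 1"
    using assms by (intro mult_mono) auto
  then have forcing: "0 \<le> C2 * x ^ d * exp (- \<beta> * t)" "C2 * x ^ d * exp (- \<beta> * t) \<le> C2 * 2 ^ d"
    using C2_pos assms by (auto simp: mult.assoc)
  have "C1 * (1 - x powr \<alpha>) = C1 - C1 * x powr \<alpha>" by (simp add: algebra_simps)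
  with logistic forcing C1_pos
  have "\<bar>C1 * (1 - x powr \<alpha>) + C2 * x ^ d * exp (- \<beta> * t)\<bar> \<le> growth_rate"
    unfolding growth_rate_def abs_le_iff by linarith
  moreover have "rhs t x = x * (C1 * (1 - x powr \<alpha>) + C2 * x ^ d * exp (- \<beta> * t))"
    by (simp add: rhs_def algebra_simps)
  ultimately show ?thesis
    using assms by (simp add: abs_mult mult.commute mult_left_mono)
qed

lemma rhs_two_neg:
  assumes "t > escape_time"
  shows "rhs t 2 < 0"
proof -
  define Q where "Q = C2 * 2 ^ d / (C1 * (2 powr \<alpha> - 1))"
  have "Q > 0" using C1_pos C2_pos two_powr_gt_one by (simp add: Q_def)
  have "Q = \<beta> * escape_time" using \<beta>_pos by (simp add: Q_def escape_time_def)
  also have "\<dots> < \<beta> * t" using assms \<beta>_pos by simp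
  also have "\<dots> < exp (\<beta> * t)" using exp_ge_add_one_self[of "\<beta> * t"] by linarith
  finally have "exp (- \<beta> * t) < 1 / Q"
    using \<open>Q > 0\<close> by (simp add: exp_minus field_simps)
  then have "C2 * 2 ^ d * exp (- \<beta> * t) < C2 * 2 ^ d * (1 / Q)"
    using C2_pos by (intro mult_strict_left_mono) auto
  also have "\<dots> = C1 * (2 powr \<alpha> - 1)"
    using C1_pos C2_pos two_powr_gt_one by (simp add: Q_def field_simps)
  finally show ?thesis by (simp add: rhs_def algebra_simps)
qed

lemma solution_continuous: "solves k \<Longrightarrow> continuous_on {0..} k"
  unfolding solves_def by (rule DERIV_continuous_on) blast

lemma solution_exp_bounds:
  assumes sol: "solves k" and "t \<ge> 0"
    and inside: "\<And>s. 0 < s \<Longrightarrow> s < t \<Longrightarrow> 0 < k s \<and> k s < 2"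
  shows "k 0 * exp (- growth_rate * t) \<le> k t" and "k t \<le> k 0 * exp (growth_rate * t)"
proof -
  have deriv: "\<forall>t\<ge>0. (k has_real_derivative rhs t (k t)) (at t within {0..})"
    using sol by (simp add: solves_def)
  have bound: "\<bar>rhs s (k s)\<bar> \<le> growth_rate * k s" if "0 < s" "s < t" for s
    using rhs_linear_bound inside[OF that] that by simp
  have "k 0 \<le> k t * exp (growth_rate * t)"
    using exp_weighted_increasing[OF deriv, of 0 t growth_rate] bound \<open>t \<ge> 0\<close>
    by (force simp: abs_le_iff)
  then have "k 0 * exp (- growth_rate * t) \<le> k t * exp (growth_rate * t) * exp (- growth_rate * t)"
    by (rule mult_right_mono) simp
  then show "k 0 * exp (- growth_rate * t) \<le> k t"
    by (simp add: mult.assoc flip: exp_add)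
  have "k t * exp (- growth_rate * t) \<le> k 0"
    using exp_weighted_decreasing[OF deriv, of 0 t "- growth_rate"] bound \<open>t \<ge> 0\<close>
    by (force simp: abs_le_iff)
  then have "k t * exp (- growth_rate * t) * exp (growth_rate * t) \<le> k 0 * exp (growth_rate * t)"
    by (rule mult_right_mono) simp
  then show "k t \<le> k 0 * exp (growth_rate * t)"
    by (simp add: mult.assoc flip: exp_add)
qed

lemma solution_between_0_and_2:
  assumes sol: "solves k" and k0: "0 < k 0" "k 0 < initial_threshold" and "t \<ge> 0"
  shows "0 < k t \<and> k t < 2"
proof (rule ccontr)
  assume "\<not> ?thesis"
  moreover have "k 0 \<in> {0<..<2}" using k0 initial_threshold_lt_one by auto
  ultimately obtain t1 where t1: "t1 > 0" "k t1 \<in> frontier {0<..<2}"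
    and before: "\<And>s. 0 \<le> s \<Longrightarrow> s < t1 \<Longrightarrow> k s \<in> {0<..<2}"
    using first_exit_time[OF solution_continuous[OF sol], of "{0<..<2}" t] \<open>t \<ge> 0\<close> by auto
  have inside: "\<And>s. 0 < s \<Longrightarrow> s < t1 \<Longrightarrow> 0 < k s \<and> k s < 2"
    using before by auto
  have "0 < k 0 * exp (- growth_rate * t1)" using k0 by simp
  also have "\<dots> \<le> k t1" using solution_exp_bounds(1)[OF sol _ inside] t1 by simp
  finally have k_t1: "k t1 = 2"
    using t1(2) by (auto simp: frontier_def interior_open)
  show False
  proof (cases "t1 \<le> escape_time")
    case True
    have "k t1 \<le> k 0 * exp (growth_rate * t1)"
      using solution_exp_bounds(2)[OF sol _ inside] t1 by simp
    also have "\<dots> < initial_threshold * exp (growth_rate * t1)"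
      using k0 by simp
    also have "\<dots> \<le> initial_threshold * exp (growth_rate * escape_time)"
      using True growth_rate_pos initial_threshold_pos by simp
    also have "\<dots> = 1"
      by (simp add: initial_threshold_def flip: exp_add)
    finally show False using k_t1 by simp
  next
    case False
    have "DERIV k t1 :> rhs t1 (k t1)"
      using sol t1(1) at_within_Ici_eq_at[of t1] unfolding solves_def by (metis less_imp_le)
    moreover have "rhs t1 (k t1) < 0"
      using False k_t1 rhs_two_neg by simp
    ultimately obtain e where "e > 0" and decreasing: "\<And>h. 0 < h \<Longrightarrow> h < e \<Longrightarrow> k t1 < k (t1 - h)"
      by (metis DERIV_neg_dec_left)
    define h where "h = min (e / 2) (t1 / 2)"
    have "0 < h" "h < e" "h < t1" using \<open>e > 0\<close> t1(1) by (auto simp: h_def)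
    then show False
      using decreasing[of h] inside[of "t1 - h"] k_t1 by simp
  qed
qed

lemma solution_powr_derivative:
  assumes sol: "solves k" and "t \<ge> 0" and pos: "k t > 0"
  shows "((\<lambda>s. k s powr (-\<alpha>) - 1) has_real_derivative
           - (\<alpha> * C1) * (k t powr (-\<alpha>) - 1) - \<alpha> * C2 * k t ^ d * k t powr (-\<alpha>) * exp (- \<beta> * t))
         (at t within {0..})"
proof -
  have "(k has_real_derivative rhs t (k t)) (at t within {0..})"
    using sol \<open>t \<ge> 0\<close> by (simp add: solves_def)
  from DERIV_chain'[OF this has_real_derivative_powr[OF pos, of "-\<alpha>"]]
  have chain: "((\<lambda>s. k s powr (-\<alpha>)) has_real_derivative (- \<alpha> * k t powr (-\<alpha> - 1)) * rhs t (k t))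
      (at t within {0..})"
    by simp
  have shift: "k t powr (-\<alpha> - 1) * k t = k t powr (-\<alpha>)"
    using pos by (simp add: powr_diff)
  have cancel: "k t powr (-\<alpha>) * k t powr \<alpha> = 1"
    using pos by (simp flip: powr_add)
  have "(- \<alpha> * k t powr (-\<alpha> - 1)) * rhs t (k t)
      = - \<alpha> * (k t powr (-\<alpha> - 1) * k t) * (C1 * (1 - k t powr \<alpha>) + C2 * k t ^ d * exp (- \<beta> * t))"
    by (simp add: rhs_def algebra_simps)
  also have "\<dots> = - (\<alpha> * C1) * k t powr (-\<alpha>) + \<alpha> * C1 * (k t powr (-\<alpha>) * k t powr \<alpha>)
      - \<alpha> * C2 * k t ^ d * k t powr (-\<alpha>) * exp (- \<beta> * t)"
    by (simp only: shift) (simp add: algebra_simps)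
  also have "\<dots> = - (\<alpha> * C1) * (k t powr (-\<alpha>) - 1) - \<alpha> * C2 * k t ^ d * k t powr (-\<alpha>) * exp (- \<beta> * t)"
    by (simp only: cancel) (simp add: algebra_simps)
  finally have "(- \<alpha> * k t powr (-\<alpha> - 1)) * rhs t (k t)
      = - (\<alpha> * C1) * (k t powr (-\<alpha>) - 1) - \<alpha> * C2 * k t ^ d * k t powr (-\<alpha>) * exp (- \<beta> * t)" .
  then show ?thesis
    using DERIV_diff[OF chain DERIV_const[of 1]] by simp
qed

lemma solution_converges_exponentially:
  assumes sol: "solves k" and k0: "0 < k 0" "k 0 < initial_threshold"
  shows "\<exists>C>0. \<exists>\<epsilon>>0. \<forall>t\<ge>0. \<bar>k t - 1\<bar> \<le> C * exp (- \<epsilon> * t)"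
proof -
  have bounded: "0 < k t" "k t < 2" if "t \<ge> 0" for t
    using solution_between_0_and_2[OF sol k0 that] by auto
  define z where "z = (\<lambda>t. k t powr (-\<alpha>) - 1)"
  define g where "g = (\<lambda>t. \<alpha> * C2 * k t ^ d * k t powr (-\<alpha>) * exp (- \<beta> * t))"
  have deriv: "\<forall>t\<ge>0. (z has_real_derivative - (\<alpha> * C1) * z t - g t) (at t within {0..})"
    using solution_powr_derivative[OF sol] bounded by (simp add: z_def g_def)
  have g_nonneg: "0 \<le> g t" if "t \<ge> 0" for t
    using \<alpha>_pos C2_pos bounded[OF that] by (simp add: g_def)
  define G where "G = \<alpha> * C2 * 2 ^ d * (1 + \<bar>z 0\<bar>)"
  have "G > 0" using \<alpha>_pos C2_pos by (simp add: G_def add_pos_nonneg)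
  have g_le: "g t \<le> G * exp (- \<beta> * t)" if "t \<ge> 0" for t
  proof -
    have "z t \<le> z 0 * exp (- (\<alpha> * C1) * t)"
      using forced_linear_decay_upper[OF deriv g_nonneg that] .
    also have "\<dots> \<le> \<bar>z 0\<bar> * exp (- (\<alpha> * C1) * t)"
      by (intro mult_right_mono) auto
    also have "\<dots> \<le> \<bar>z 0\<bar> * 1"
      using \<alpha>_pos C1_pos that by (intro mult_left_mono) auto
    finally have "k t powr (-\<alpha>) \<le> 1 + \<bar>z 0\<bar>" by (simp add: z_def)
    moreover have "k t ^ d \<le> 2 ^ d" using bounded[OF that] by (intro power_mono) auto
    ultimately have "k t ^ d * k t powr (-\<alpha>) \<le> 2 ^ d * (1 + \<bar>z 0\<bar>)"
      by (intro mult_mono) auto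
    then show ?thesis
      using \<alpha>_pos C2_pos by (simp add: g_def G_def mult_right_mono)
  qed
  have "\<alpha> * C1 > 0" using \<alpha>_pos C1_pos by simp
  from forced_linear_exp_decay[OF deriv this \<beta>_pos \<open>G > 0\<close>] g_nonneg g_le
  obtain A \<epsilon> where "A > 0" "\<epsilon> > 0" and z_decay: "\<And>t. t \<ge> 0 \<Longrightarrow> \<bar>z t\<bar> \<le> A * exp (- \<epsilon> * t)"
    by blast
  define c where "c = \<alpha> * 2 powr (-\<alpha> - 1)"
  have "c > 0" using \<alpha>_pos by (simp add: c_def)
  have "\<bar>k t - 1\<bar> \<le> A / c * exp (- \<epsilon> * t)" if "t \<ge> 0" for t
  proof -
    have "c * \<bar>k t - 1\<bar> \<le> \<bar>z t\<bar>"
      using abs_diff_one_le_powr_neg[of "k t" 2 \<alpha>] bounded[OF that] \<alpha>_pos by (simp add: c_def z_def)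
    also have "\<dots> \<le> A * exp (- \<epsilon> * t)" using z_decay[OF that] .
    finally show ?thesis using \<open>c > 0\<close> by (simp add: field_simps)
  qed
  moreover have "A / c > 0" using \<open>A > 0\<close> \<open>c > 0\<close> by simp
  ultimately show ?thesis using \<open>\<epsilon> > 0\<close> by blast
qed

end

theorem lemma5p12:
  fixes C1 C2 \<alpha> \<beta> :: real and d :: nat
  assumes "C1 > 0" "C2 > 0" "\<alpha> > 0" "\<beta> > 0" "d \<ge> 1"
  shows "\<exists>\<delta>>0. \<forall>k :: real \<Rightarrow> real.
           (\<forall>t\<ge>0. (k has_real_derivative
               (C1 * k t * (1 - k t powr \<alpha>) + C2 * k t ^ (d + 1) * exp (- \<beta> * t)))
               (at t within {0..}))
           \<and> 0 < k 0 \<and> k 0 < \<delta>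
           \<longrightarrow> (\<exists>C>0. \<exists>\<epsilon>>0. \<forall>t\<ge>0. \<bar>k t - 1\<bar> \<le> C * exp (- \<epsilon> * t))"
proof -
  \<comment> \<open>The argument works for every \<open>d\<close>.\<close>
  interpret perturbed_logistic C1 C2 \<alpha> \<beta> d
    using assms by unfold_locales
  show ?thesis
  proof (rule exI[of _ initial_threshold], intro conjI allI impI initial_threshold_pos)
    fix k :: "real \<Rightarrow> real"
    assume "(\<forall>t\<ge>0. (k has_real_derivative
               (C1 * k t * (1 - k t powr \<alpha>) + C2 * k t ^ (d + 1) * exp (- \<beta> * t)))
               (at t within {0..}))
           \<and> 0 < k 0 \<and> k 0 < initial_threshold"
    then show "\<exists>C>0. \<exists>\<epsilon>>0. \<forall>t\<ge>0. \<bar>k t - 1\<bar> \<le> C * exp (- \<epsilon> * t)"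
      using solution_converges_exponentially unfolding solves_def rhs_def by blast
  qed
qed

end
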